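(* Let $(\Theta,d)$ be a totally bounded semimetric space. If $(X^\theta)_{\theta\in\Theta}$ is a nearly sub-Gaussian random field w.r.t. $d$, then there is some $\varepsilon>1$ such that $(X^\theta)_{\theta\in\Theta}$ is a sub-Gaussian random field w.r.t. $\overline d:=\varepsilon\cdot d$.
   Context: A centered stochastic process $(X^\theta)_{\theta\in\Theta}$ is a nearly sub-Gaussian random field w.r.t. a semimetric $d$ if there is $C\ge1$ such that $\mathbb E[\exp(\lambda(X^\theta-X^\vartheta))]\le C\exp(\lambda^2d(\theta,\vartheta)^2/2)$ for all $\theta,\vartheta\in\Theta$ and $\lambda>0$; it is a sub-Gaussian random field w.r.t. $d$ if this holds with $C=1$. *)

theory Defs
  imports "HOL-Probability.Probability"
begin

definition semimetric_on :: "'t set \<Rightarrow> ('t \<Rightarrow> 't \<Rightarrow> real) \<Rightarrow> bool" where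
  "semimetric_on \<Theta> d \<longleftrightarrow>
     (\<forall>x\<in>\<Theta>. \<forall>y\<in>\<Theta>. 0 \<le> d x y \<and> d x y = d y x) \<and>
     (\<forall>x\<in>\<Theta>. d x x = 0) \<and>
     (\<forall>x\<in>\<Theta>. \<forall>y\<in>\<Theta>. \<forall>z\<in>\<Theta>. d x z \<le> d x y + d y z)"

definition totally_bounded_wrt :: "'t set \<Rightarrow> ('t \<Rightarrow> 't \<Rightarrow> real) \<Rightarrow> bool" where
  "totally_bounded_wrt \<Theta> d \<longleftrightarrow>
     (\<forall>e>0. \<exists>F. finite F \<and> F \<subseteq> \<Theta> \<and> (\<forall>x\<in>\<Theta>. \<exists>y\<in>F. d x y < e))"

definition centered_process :: "'a measure \<Rightarrow> 't set \<Rightarrow> ('t \<Rightarrow> 'a \<Rightarrow> real) \<Rightarrow> bool" where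
  "centered_process M \<Theta> X \<longleftrightarrow>
     (\<forall>\<theta>\<in>\<Theta>. X \<theta> \<in> borel_measurable M \<and> integrable M (X \<theta>) \<and> integral\<^sup>L M (X \<theta>) = 0)"

definition nearly_subgaussian_rf ::
  "'a measure \<Rightarrow> 't set \<Rightarrow> ('t \<Rightarrow> 't \<Rightarrow> real) \<Rightarrow> ('t \<Rightarrow> 'a \<Rightarrow> real) \<Rightarrow> bool" where
  "nearly_subgaussian_rf M \<Theta> d X \<longleftrightarrow> centered_process M \<Theta> X \<and>
     (\<exists>C\<ge>1. \<forall>\<theta>\<in>\<Theta>. \<forall>\<eta>\<in>\<Theta>. \<forall>l::real. l > 0 \<longrightarrow>
        (\<integral>\<^sup>+\<omega>. ennreal (exp (l * (X \<theta> \<omega> - X \<eta> \<omega>))) \<partial>M)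
          \<le> ennreal (C * exp (l\<^sup>2 * (d \<theta> \<eta>)\<^sup>2 / 2)))"

definition subgaussian_rf ::
  "'a measure \<Rightarrow> 't set \<Rightarrow> ('t \<Rightarrow> 't \<Rightarrow> real) \<Rightarrow> ('t \<Rightarrow> 'a \<Rightarrow> real) \<Rightarrow> bool" where
  "subgaussian_rf M \<Theta> d X \<longleftrightarrow> centered_process M \<Theta> X \<and>
     (\<forall>\<theta>\<in>\<Theta>. \<forall>\<eta>\<in>\<Theta>. \<forall>l::real. l > 0 \<longrightarrow>
        (\<integral>\<^sup>+\<omega>. ennreal (exp (l * (X \<theta> \<omega> - X \<eta> \<omega>))) \<partial>M)
          \<le> ennreal (exp (l\<^sup>2 * (d \<theta> \<eta>)\<^sup>2 / 2)))"

end

theory Submission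
  imports Defs
begin

text \<open>The factor \<open>C\<close> can be absorbed into the variance proxy, one increment
  \<open>Y = X \<theta> - X \<eta>\<close> with \<open>\<delta> = d \<theta> \<eta>\<close> at a time. If \<open>l \<delta> \<ge> 1\<close>, then
  \<open>C exp (l\<^sup>2 \<delta>\<^sup>2 / 2) \<le> exp (50 C\<^sup>2 l\<^sup>2 \<delta>\<^sup>2)\<close> outright. If \<open>l \<delta> < 1\<close>, the second-order
  Taylor bound \<open>exp (l y) \<le> 1 + l y + 2 (l \<delta>)\<^sup>2 (exp (2y/\<delta>) + exp (-2y/\<delta>))\<close> is integrated:
  the linear term vanishes because \<open>Y\<close> is centered, and the hypothesis at \<open>\<plusminus>2/\<delta>\<close>
  bounds the rest by \<open>4 C e\<^sup>2 (l \<delta>)\<^sup>2\<close>. If \<open>\<delta> = 0\<close>, bounded moment generating functions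
  of \<open>\<plusminus>Y\<close> force \<open>Y = 0\<close> almost surely.\<close>

lemma exp_le_second_order_taylor:
  fixes x :: real
  shows "exp x \<le> 1 + x + x\<^sup>2 / 2 * exp \<bar>x\<bar>"
proof -
  obtain t where t: "\<bar>t\<bar> \<le> \<bar>x\<bar>" "exp x = (\<Sum>m<2. x ^ m / fact m) + exp t / fact 2 * x ^ 2"
    using Maclaurin_exp_le[of x 2] by blast
  have "exp t / 2 * x\<^sup>2 \<le> exp \<bar>x\<bar> / 2 * x\<^sup>2"
    using t(1) by (intro mult_right_mono) auto
  with t(2) show ?thesis
    by (simp add: numeral_2_eq_2 mult.commute)
qed

lemma power2_le_4_exp:
  fixes u :: real
  assumes "0 \<le> u"
  shows "u\<^sup>2 \<le> 4 * exp u"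
proof -
  have "u\<^sup>2 / 4 \<le> (1 + u / 2)\<^sup>2"
    using assms by (simp add: power2_eq_square field_simps)
  also have "\<dots> \<le> (exp (u / 2))\<^sup>2"
    using assms exp_ge_add_one_self[of "u / 2"] by (intro power_mono) auto
  also have "\<dots> = exp u"
    by (simp add: power2_eq_square flip: exp_add)
  finally show ?thesis by simp
qed

lemma exp_mult_le_linear_plus_exp_sym:
  fixes y l \<delta> :: real
  assumes "0 < \<delta>" "0 \<le> l" "l * \<delta> \<le> 1"
  shows "exp (l * y) \<le> 1 + l * y + 2 * (l * \<delta>)\<^sup>2 * (exp (2 / \<delta> * y) + exp (2 / \<delta> * - y))"
proof -
  define u where "u = \<bar>y\<bar> / \<delta>"
  define s where "s = l * \<delta>"
  have u: "0 \<le> u" and s: "0 \<le> s" "s \<le> 1"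
    using assms by (auto simp: u_def s_def)
  have ly: "\<bar>l * y\<bar> = s * u"
    using assms by (simp add: u_def s_def abs_mult)
  have exp_2u: "exp (2 * u) \<le> exp (2 / \<delta> * y) + exp (2 / \<delta> * - y)"
    by (cases "0 \<le> y") (simp_all add: u_def)
  have sq: "(l * y)\<^sup>2 = (s * u)\<^sup>2"
    using ly by (metis power2_abs)
  have "exp \<bar>l * y\<bar> \<le> exp u"
    using ly s u by (simp add: mult_left_le_one_le)
  then have "(l * y)\<^sup>2 / 2 * exp \<bar>l * y\<bar> \<le> (s * u)\<^sup>2 / 2 * exp u"
    unfolding sq by (intro mult_left_mono) auto
  also have "\<dots> = s\<^sup>2 * (u\<^sup>2 * exp u) / 2"
    by (simp add: power_mult_distrib)
  also have "\<dots> \<le> s\<^sup>2 * (4 * exp u * exp u) / 2"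
    using power2_le_4_exp[OF u] by (intro divide_right_mono mult_left_mono) auto
  also have "\<dots> = 2 * s\<^sup>2 * exp (2 * u)"
    by (simp add: mult_exp_exp)
  also have "\<dots> \<le> 2 * s\<^sup>2 * (exp (2 / \<delta> * y) + exp (2 / \<delta> * - y))"
    using exp_2u by (intro mult_left_mono) auto
  finally show ?thesis
    using exp_le_second_order_taylor[of "l * y"] by (simp add: s_def)
qed

lemma integrable_if_nn_integral_le:
  fixes f :: "'a \<Rightarrow> real"
  assumes "f \<in> borel_measurable M" "\<And>x. 0 \<le> f x" "0 \<le> B"
    and "(\<integral>\<^sup>+x. ennreal (f x) \<partial>M) \<le> ennreal B"
  shows "integrable M f" "integral\<^sup>L M f \<le> B"
proof -
  have "(\<integral>\<^sup>+x. ennreal (norm (f x)) \<partial>M) < \<infinity>"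
    using assms(2,4) by (simp add: order.strict_trans1)
  then show f: "integrable M f"
    using assms(1) by (rule integrableI_bounded[rotated])
  have "ennreal (integral\<^sup>L M f) \<le> ennreal B"
    using nn_integral_eq_integral[OF f] assms by simp
  then show "integral\<^sup>L M f \<le> B"
    using assms(3) by simp
qed

lemma measure_gt_eq_0_if_mgf_bounded:
  fixes Y :: "'a \<Rightarrow> real"
  assumes "finite_measure M" and [measurable]: "Y \<in> borel_measurable M"
    and "0 < a" "0 \<le> C"
    and bound: "\<And>l. 0 < l \<Longrightarrow> (\<integral>\<^sup>+x. ennreal (exp (l * Y x)) \<partial>M) \<le> ennreal C"
  shows "measure M {x\<in>space M. a < Y x} = 0"
proof -
  interpret finite_measure M by fact
  define N where "N = {x\<in>space M. a < Y x}"
  define p where "p = measure M N"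
  have N [measurable]: "N \<in> sets M"
    unfolding N_def by measurable
  have markov: "p * (1 + l * a) \<le> C" if "0 < l" for l
  proof -
    have "ennreal (exp (l * a)) * emeasure M N = (\<integral>\<^sup>+x. ennreal (exp (l * a)) * indicator N x \<partial>M)"
      by (simp add: nn_integral_cmult_indicator)
    also have "\<dots> \<le> (\<integral>\<^sup>+x. ennreal (exp (l * Y x)) \<partial>M)"
      using \<open>0 < l\<close> by (intro nn_integral_mono) (auto simp: N_def indicator_def)
    also have "\<dots> \<le> ennreal C"
      using bound[OF \<open>0 < l\<close>] .
    finally have "ennreal (exp (l * a) * p) \<le> ennreal C"
      by (simp add: p_def emeasure_eq_measure ennreal_mult)
    then have "exp (l * a) * p \<le> C"
      using \<open>0 \<le> C\<close> by simp
    moreover have "p * (1 + l * a) \<le> p * exp (l * a)"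
      by (intro mult_left_mono exp_ge_add_one_self) (simp add: p_def)
    ultimately show ?thesis
      by (simp add: mult.commute)
  qed
  show ?thesis
  proof (rule ccontr)
    assume "measure M {x\<in>space M. a < Y x} \<noteq> 0"
    then have "0 < p"
      by (simp add: p_def N_def zero_less_measure_iff)
    have "p * (1 + (C + 1) / (a * p) * a) \<le> C"
      using \<open>0 < p\<close> \<open>0 < a\<close> \<open>0 \<le> C\<close> by (intro markov) simp
    moreover have "p * (1 + (C + 1) / (a * p) * a) = p + (C + 1)"
      using \<open>0 < p\<close> \<open>0 < a\<close> by (simp add: field_simps)
    ultimately show False
      using \<open>0 < p\<close> by linarith
  qed
qed

lemma AE_le_0_if_mgf_bounded:
  fixes Y :: "'a \<Rightarrow> real"
  assumes "finite_measure M" and [measurable]: "Y \<in> borel_measurable M" and "0 \<le> C"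
    and "\<And>l. 0 < l \<Longrightarrow> (\<integral>\<^sup>+x. ennreal (exp (l * Y x)) \<partial>M) \<le> ennreal C"
  shows "AE x in M. Y x \<le> 0"
proof -
  interpret finite_measure M by fact
  have "AE x in M. Y x \<le> 1 / Suc n" for n :: nat
  proof (rule AE_I')
    have "measure M {x\<in>space M. 1 / Suc n < Y x} = 0"
      by (rule measure_gt_eq_0_if_mgf_bounded) (use assms in auto)
    then show "{x\<in>space M. 1 / Suc n < Y x} \<in> null_sets M"
      by (intro null_setsI) (simp_all add: emeasure_eq_measure)
  qed auto
  then have "AE x in M. \<forall>n::nat. Y x \<le> 1 / Suc n"
    by (simp add: AE_all_countable)
  then show ?thesis
  proof eventually_elim
    case (elim x)
    show "Y x \<le> 0"
    proof (rule ccontr)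
      assume "\<not> Y x \<le> 0"
      then obtain n where "inverse (real (Suc n)) < Y x"
        using reals_Archimedean by (meson not_le)
      then show False
        using elim[rule_format, of n] by (simp add: inverse_eq_divide)
    qed
  qed
qed

lemma mult_exp_le_exp_if_ge_1:
  fixes C s :: real
  assumes "1 \<le> C" "1 \<le> s"
  shows "C * exp (s / 2) \<le> exp (100 * C\<^sup>2 * s / 2)"
proof -
  have "1 \<le> C * s"
    using assms mult_mono[of 1 C 1 s] by simp
  then have "C * 1 \<le> C * (C * s)"
    using assms by (intro mult_left_mono) auto
  moreover have "1 * s \<le> C\<^sup>2 * s"
    using assms by (intro mult_right_mono) (auto simp: one_le_power)
  ultimately have "C + s / 2 \<le> 100 * C\<^sup>2 * s / 2"
    using assms unfolding power2_eq_square mult.assoc by linarith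
  have "C \<le> exp C"
    using exp_ge_add_one_self[of C] by linarith
  then have "C * exp (s / 2) \<le> exp C * exp (s / 2)"
    by (intro mult_right_mono) auto
  also have "\<dots> = exp (C + s / 2)"
    by (simp add: exp_add)
  also have "\<dots> \<le> exp (100 * C\<^sup>2 * s / 2)"
    using \<open>C + s / 2 \<le> 100 * C\<^sup>2 * s / 2\<close> by simp
  finally show ?thesis .
qed

lemma one_add_le_exp_if_nonneg:
  fixes C s :: real
  assumes "1 \<le> C" "0 \<le> s"
  shows "1 + 4 * (C * exp 2) * s \<le> exp (100 * C\<^sup>2 * s / 2)"
proof -
  have "exp (2::real) = exp 1 * exp 1"
    by (simp flip: exp_add)
  also have "\<dots> \<le> 3 * 3"
    using exp_le by (intro mult_mono) auto
  also have "\<dots> \<le> 9 * C"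
    using assms by simp
  finally have "C * exp 2 \<le> C * (9 * C)"
    using assms by (intro mult_left_mono) auto
  then have "4 * (C * exp 2) * s \<le> 4 * (C * (9 * C)) * s"
    using assms by (intro mult_right_mono) auto
  also have "\<dots> \<le> 100 * C\<^sup>2 * s / 2"
    using assms by (simp add: power2_eq_square)
  finally show ?thesis
    using exp_ge_add_one_self[of "100 * C\<^sup>2 * s / 2"] by linarith
qed

lemma mgf_le_one_add_quadratic_if_centered:
  fixes Y :: "'a \<Rightarrow> real"
  assumes "prob_space M" and [measurable]: "Y \<in> borel_measurable M"
    and "integrable M Y" "integral\<^sup>L M Y = 0"
    and "0 < \<delta>" "0 \<le> l" "l * \<delta> \<le> 1" "0 \<le> K"
    and "(\<integral>\<^sup>+x. ennreal (exp (2 / \<delta> * Y x)) \<partial>M) \<le> ennreal K"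
    and "(\<integral>\<^sup>+x. ennreal (exp (2 / \<delta> * - Y x)) \<partial>M) \<le> ennreal K"
  shows "(\<integral>\<^sup>+x. ennreal (exp (l * Y x)) \<partial>M) \<le> ennreal (1 + 4 * K * (l * \<delta>)\<^sup>2)"
proof -
  interpret prob_space M by fact
  define A where "A x = exp (2 / \<delta> * Y x)" for x
  define B where "B x = exp (2 / \<delta> * - Y x)" for x
  define R where "R x = 1 + l * Y x + 2 * (l * \<delta>)\<^sup>2 * (A x + B x)" for x
  have "A \<in> borel_measurable M" "B \<in> borel_measurable M"
    unfolding A_def B_def by measurable
  then have A: "integrable M A" "integral\<^sup>L M A \<le> K"
    and B: "integrable M B" "integral\<^sup>L M B \<le> K"
    using integrable_if_nn_integral_le[of A M K] integrable_if_nn_integral_le[of B M K] assms(8-10)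
    unfolding A_def B_def by auto
  have exp_le_R: "exp (l * Y x) \<le> R x" for x
    unfolding R_def A_def B_def using assms(5-7) by (rule exp_mult_le_linear_plus_exp_sym)
  have R: "integrable M R"
    unfolding R_def using A(1) B(1) assms(3) by simp
  have "(\<integral>\<^sup>+x. ennreal (exp (l * Y x)) \<partial>M) \<le> (\<integral>\<^sup>+x. ennreal (R x) \<partial>M)"
    using exp_le_R by (intro nn_integral_mono ennreal_leI)
  also have "\<dots> = ennreal (integral\<^sup>L M R)"
    using R exp_le_R[THEN order_trans[OF less_imp_le[OF exp_gt_zero]]]
    by (intro nn_integral_eq_integral AE_I2)
  also have "integral\<^sup>L M R = 1 + 2 * (l * \<delta>)\<^sup>2 * (integral\<^sup>L M A + integral\<^sup>L M B)"
    unfolding R_def using A(1) B(1) assms(3,4) by (simp add: integral_add prob_space)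
  also have "\<dots> \<le> 1 + 4 * K * (l * \<delta>)\<^sup>2"
    using A(2) B(2) mult_left_mono[of "integral\<^sup>L M A + integral\<^sup>L M B" "2 * K" "2 * (l * \<delta>)\<^sup>2"]
    by simp
  finally show ?thesis
    by (simp add: ennreal_leI)
qed

lemma subgaussian_mgf_if_nearly_subgaussian:
  fixes Y :: "'a \<Rightarrow> real"
  assumes "prob_space M" and [measurable]: "Y \<in> borel_measurable M"
    and "integrable M Y" "integral\<^sup>L M Y = 0" "1 \<le> C" "0 \<le> \<delta>"
    and upper: "\<And>l. 0 < l \<Longrightarrow>
      (\<integral>\<^sup>+x. ennreal (exp (l * Y x)) \<partial>M) \<le> ennreal (C * exp (l\<^sup>2 * \<delta>\<^sup>2 / 2))"
    and lower: "\<And>l. 0 < l \<Longrightarrow>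
      (\<integral>\<^sup>+x. ennreal (exp (l * - Y x)) \<partial>M) \<le> ennreal (C * exp (l\<^sup>2 * \<delta>\<^sup>2 / 2))"
    and "0 < l"
  shows "(\<integral>\<^sup>+x. ennreal (exp (l * Y x)) \<partial>M) \<le> ennreal (exp (l\<^sup>2 * (10 * C * \<delta>)\<^sup>2 / 2))"
proof -
  interpret prob_space M by fact
  have rhs: "l\<^sup>2 * (10 * C * \<delta>)\<^sup>2 / 2 = 100 * C\<^sup>2 * (l * \<delta>)\<^sup>2 / 2"
    by (simp add: power_mult_distrib)
  consider "\<delta> = 0" | "0 < \<delta>" "1 \<le> l * \<delta>" | "0 < \<delta>" "l * \<delta> < 1"
    using \<open>0 \<le> \<delta>\<close> by fastforce
  then show ?thesis
  proof cases
    case 1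
    have "AE x in M. Y x \<le> 0"
      by (rule AE_le_0_if_mgf_bounded[of M Y C]) (use upper 1 \<open>1 \<le> C\<close> in \<open>simp_all add: finite_measure_axioms\<close>)
    moreover have "AE x in M. - Y x \<le> 0"
      by (rule AE_le_0_if_mgf_bounded[of M "\<lambda>x. - Y x" C]) (use lower 1 \<open>1 \<le> C\<close> in \<open>simp_all add: finite_measure_axioms\<close>)
    ultimately have "AE x in M. ennreal (exp (l * Y x)) = 1"
      by eventually_elim simp
    then have "(\<integral>\<^sup>+x. ennreal (exp (l * Y x)) \<partial>M) = (\<integral>\<^sup>+x. 1 \<partial>M)"
      by (rule nn_integral_cong_AE)
    then have "(\<integral>\<^sup>+x. ennreal (exp (l * Y x)) \<partial>M) = 1"
      by (simp add: emeasure_space_1)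
    then show ?thesis
      using 1 by simp
  next
    case 2
    have "C * exp ((l * \<delta>)\<^sup>2 / 2) \<le> exp (100 * C\<^sup>2 * (l * \<delta>)\<^sup>2 / 2)"
      using 2 \<open>1 \<le> C\<close> by (intro mult_exp_le_exp_if_ge_1) (auto simp: one_le_power)
    then show ?thesis
      using upper[OF \<open>0 < l\<close>] rhs by (auto simp: power_mult_distrib intro: order_trans ennreal_leI)
  next
    case 3
    have exp2: "(2 / \<delta>)\<^sup>2 * \<delta>\<^sup>2 / 2 = 2"
      using 3 by (simp add: power_divide)
    have "(\<integral>\<^sup>+x. ennreal (exp (l * Y x)) \<partial>M) \<le> ennreal (1 + 4 * (C * exp 2) * (l * \<delta>)\<^sup>2)"
      using 3 \<open>0 < l\<close> \<open>1 \<le> C\<close> upper[of "2 / \<delta>"] lower[of "2 / \<delta>"]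
      by (intro mgf_le_one_add_quadratic_if_centered assms(1-4)) (simp_all add: exp2)
    also have "\<dots> \<le> ennreal (exp (l\<^sup>2 * (10 * C * \<delta>)\<^sup>2 / 2))"
      unfolding rhs using \<open>1 \<le> C\<close> by (intro ennreal_leI one_add_le_exp_if_nonneg) auto
    finally show ?thesis .
  qed
qed

theorem lemmaA1:
  fixes M :: "'a measure" and \<Theta> :: "'t set" and d :: "'t \<Rightarrow> 't \<Rightarrow> real"
    and X :: "'t \<Rightarrow> 'a \<Rightarrow> real"
  assumes "prob_space M"
    and "semimetric_on \<Theta> d"
    and "totally_bounded_wrt \<Theta> d"
    and "nearly_subgaussian_rf M \<Theta> d X"
  shows "\<exists>\<epsilon>>1. subgaussian_rf M \<Theta> (\<lambda>\<theta> \<eta>. \<epsilon> * d \<theta> \<eta>) X"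
proof -
  have centered: "centered_process M \<Theta> X"
    using assms(4) by (simp add: nearly_subgaussian_rf_def)
  obtain C where "1 \<le> C" and near: "\<And>\<theta> \<eta> l. \<theta> \<in> \<Theta> \<Longrightarrow> \<eta> \<in> \<Theta> \<Longrightarrow> 0 < l \<Longrightarrow>
      (\<integral>\<^sup>+\<omega>. ennreal (exp (l * (X \<theta> \<omega> - X \<eta> \<omega>))) \<partial>M) \<le> ennreal (C * exp (l\<^sup>2 * (d \<theta> \<eta>)\<^sup>2 / 2))"
    using assms(4) unfolding nearly_subgaussian_rf_def by blast
  have "(\<integral>\<^sup>+\<omega>. ennreal (exp (l * (X \<theta> \<omega> - X \<eta> \<omega>))) \<partial>M)
      \<le> ennreal (exp (l\<^sup>2 * (10 * C * d \<theta> \<eta>)\<^sup>2 / 2))"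
    if "\<theta> \<in> \<Theta>" "\<eta> \<in> \<Theta>" "0 < l" for \<theta> \<eta> l
  proof (rule subgaussian_mgf_if_nearly_subgaussian[OF assms(1)])
    have "integrable M (X \<theta>)" "integrable M (X \<eta>)" "integral\<^sup>L M (X \<theta>) = 0" "integral\<^sup>L M (X \<eta>) = 0"
      using centered that by (auto simp: centered_process_def)
    then show "(\<lambda>\<omega>. X \<theta> \<omega> - X \<eta> \<omega>) \<in> borel_measurable M" "integrable M (\<lambda>\<omega>. X \<theta> \<omega> - X \<eta> \<omega>)"
      "(\<integral>\<omega>. X \<theta> \<omega> - X \<eta> \<omega> \<partial>M) = 0"
      by auto
    have "0 \<le> d \<theta> \<eta>" "d \<eta> \<theta> = d \<theta> \<eta>"
      using assms(2) that by (simp_all add: semimetric_on_def)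
    then show "0 \<le> d \<theta> \<eta>" by simp
    from \<open>d \<eta> \<theta> = d \<theta> \<eta>\<close> show "(\<integral>\<^sup>+\<omega>. ennreal (exp (k * - (X \<theta> \<omega> - X \<eta> \<omega>))) \<partial>M)
        \<le> ennreal (C * exp (k\<^sup>2 * (d \<theta> \<eta>)\<^sup>2 / 2))" if "0 < k" for k
      using near[OF \<open>\<eta> \<in> \<Theta>\<close> \<open>\<theta> \<in> \<Theta>\<close> \<open>0 < k\<close>] by simp
  qed (use near that \<open>1 \<le> C\<close> in auto)
  moreover have "1 < 10 * C"
    using \<open>1 \<le> C\<close> by simp
  ultimately show ?thesis
    using centered unfolding subgaussian_rf_def by (intro exI[of _ "10 * C"]) auto
qed

end
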